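(* Let $A\subseteq\{1,\dots,n\}$ and $w\in S_n$. If $\mathrm{Dela}_A(\bar\chi^w)\ne0$, then $\{(j,j+\iota_j(w)):j\notin A,\ \iota_j(w)\ne0\}\subseteq U_A^\vee$.
   Context: Let $q$ be a prime power, $\mathfrak{ut}_n$ the additive group of strictly upper triangular $n\times n$ matrices over $\mathbb{F}_q$. For $w\in S_n$ (one-line notation), $\iota_k(w)=\#\{i<w^{-1}(k):w(i)>k\}$ and $\mathfrak{ut}_w=\{x:x_{ij}\ne0\Rightarrow0<j-i\le\iota_i(w)\}$, a subgroup; $\bar\chi^w$ is the character of $\mathrm{Ind}_{\mathfrak{ut}_w}^{\mathfrak{ut}_n}(\mathbf 1)$ (the permutation character on cosets of $\mathfrak{ut}_w$). For $A\subseteq\{1,\dots,n\}$ and $1\le i<j\le n$, let $c_i=n-\#\{a\in A:a>i\}$, $U_A=\{(i,j):i\in A,j>c_i\}$, $L_A=\{(i,j):i\in A,j\le c_i\}$, $U_A^\vee=\{(i,j):i\notin A,j\le c_i\}$, $R_A=\{(i,j):i\notin A,j>c_i\}$, and $\mathfrak{ut}_A,\mathfrak{l}_A,\mathfrak{ut}_A^\vee,\mathfrak{r}_A$ the subgroups of matrices supported on them. For a function $\gamma$ on $\mathfrak{ut}_n$, $\mathrm{Dela}_A(\gamma)(u',u)=q^{-|L_A|-|R_A|}\sum_{l\in\mathfrak{l}_A,r\in\mathfrak{r}_A}(\frac{-1}{q-1})^{\#\{(i,j):r_{ij}\ne0\}}\gamma(l+u'+u+r)$ for $u'\in\mathfrak{ut}_A^\vee,u\in\mathfrak{ut}_A$.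 *)

theory Defs
  imports Complex_Main "HOL-Combinatorics.Permutations"
begin

text \<open>Matrices over a finite field 'a are functions nat \<Rightarrow> nat \<Rightarrow> 'a
  (entries indexed from 1); a subgroup is described by its support set of positions.\<close>

type_synonym 'a mat = "nat \<Rightarrow> nat \<Rightarrow> 'a"

definition madd :: "'a::plus mat \<Rightarrow> 'a mat \<Rightarrow> 'a mat" where
  "madd x y = (\<lambda>i j. x i j + y i j)"

definition positions :: "nat \<Rightarrow> (nat \<times> nat) set" where
  "positions n = {(i,j). 1 \<le> i \<and> i < j \<and> j \<le> n}"

definition supported :: "(nat \<times> nat) set \<Rightarrow> 'a::zero mat set" where
  "supported S = {x. \<forall>i j. x i j \<noteq> 0 \<longrightarrow> (i,j) \<in> S}"

definition ut :: "nat \<Rightarrow> 'a::zero mat set" where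
  "ut n = supported (positions n)"

definition iota :: "nat \<Rightarrow> (nat \<Rightarrow> nat) \<Rightarrow> nat \<Rightarrow> nat" where
  "iota n w k = card {i \<in> {1..n}. i < inv w k \<and> w i > k}"

definition ut_w :: "nat \<Rightarrow> (nat \<Rightarrow> nat) \<Rightarrow> 'a::zero mat set" where
  "ut_w n w = {x \<in> ut n. \<forall>i j. x i j \<noteq> 0 \<longrightarrow> 0 < j - i \<and> j - i \<le> iota n w i}"

text \<open>Character of Ind from ut_w to ut_n of the trivial character: the permutation
  character on the cosets of ut_w in ut_n.\<close>
definition chibar :: "nat \<Rightarrow> (nat \<Rightarrow> nat) \<Rightarrow> 'a::{finite,field} mat \<Rightarrow> complex" where
  "chibar n w g = of_nat (card {C \<in> {(\<lambda>h. madd x h) ` ut_w n w | x. x \<in> ut n}.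
                                  (\<lambda>c. madd g c) ` C = C})"

definition cA :: "nat \<Rightarrow> nat set \<Rightarrow> nat \<Rightarrow> nat" where
  "cA n A i = n - card {a \<in> A. a > i}"

definition UA :: "nat \<Rightarrow> nat set \<Rightarrow> (nat \<times> nat) set" where
  "UA n A = {(i,j) \<in> positions n. i \<in> A \<and> j > cA n A i}"

definition LA :: "nat \<Rightarrow> nat set \<Rightarrow> (nat \<times> nat) set" where
  "LA n A = {(i,j) \<in> positions n. i \<in> A \<and> j \<le> cA n A i}"

definition UAv :: "nat \<Rightarrow> nat set \<Rightarrow> (nat \<times> nat) set" where
  "UAv n A = {(i,j) \<in> positions n. i \<notin> A \<and> j \<le> cA n A i}"

definition RA :: "nat \<Rightarrow> nat set \<Rightarrow> (nat \<times> nat) set" where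
  "RA n A = {(i,j) \<in> positions n. i \<notin> A \<and> j > cA n A i}"

definition Dela :: "nat \<Rightarrow> nat set \<Rightarrow> ('a::{finite,field} mat \<Rightarrow> complex)
                     \<Rightarrow> 'a mat \<Rightarrow> 'a mat \<Rightarrow> complex" where
  "Dela n A \<gamma> u' u =
     (1 / of_nat (card (UNIV :: 'a set)) ^ (card (LA n A) + card (RA n A))) *
     (\<Sum>l \<in> supported (LA n A). \<Sum>r \<in> supported (RA n A).
        (- 1 / (of_nat (card (UNIV :: 'a set)) - 1)) ^ card {(i,j). r i j \<noteq> 0} *
        \<gamma> (madd (madd (madd l u') u) r))"

end

theory Submission
  imports Defs
begin

text \<open>The permutation character \<open>chibar n w\<close> is invariant under translation by
  \<open>ut_w n w\<close>. If some \<open>(j, j + \<iota>\<^sub>j(w))\<close> with \<open>j \<notin> A\<close> were not in \<open>U\<^sub>A\<^sup>\<or>\<close>, it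
  would lie in \<open>R\<^sub>A\<close>, and every matrix supported at that single position lies in
  \<open>ut_w n w\<close>. Summing the \<open>r\<close>-sum of \<open>Dela\<^sub>A\<close> first over the entry of \<open>r\<close> at that
  position then produces the factor \<open>1 + (q - 1) \<cdot> (-1/(q - 1)) = 0\<close>, so
  \<open>Dela\<^sub>A(chibar n w)\<close> vanishes identically.\<close>

definition mat_single :: "nat \<times> nat \<Rightarrow> 'a::zero \<Rightarrow> 'a mat" where
  "mat_single p c = (\<lambda>i j. if (i, j) = p then c else 0)"

lemma madd_assoc: "madd (madd x y) z = madd x (madd y (z::'a::semigroup_add mat))"
  by (intro ext) (simp add: madd_def add.assoc)

lemma madd_left_commute: "madd x (madd y z) = madd y (madd x (z::'a::ab_semigroup_add mat))"
  by (intro ext) (simp add: madd_def add.left_commute)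

lemma madd_supported:
  "x \<in> supported S \<Longrightarrow> y \<in> supported S \<Longrightarrow> madd x (y::'a::monoid_add mat) \<in> supported S"
  by (auto simp: supported_def madd_def) (metis add.right_neutral)

lemma madd_image_supported:
  assumes "h \<in> supported S"
  shows "madd h ` supported S = (supported S :: 'a::group_add mat set)"
proof
  show "madd h ` supported S \<subseteq> supported S"
    using madd_supported[OF assms] by blast
  show "supported S \<subseteq> madd h ` supported S"
  proof
    fix y :: "'a mat" assume y: "y \<in> supported S"
    have "(\<lambda>i j. - h i j + y i j) \<in> supported S"
      using assms y by (auto simp: supported_def) (metis add.right_neutral neg_0_equal_iff_equal)
    moreover have "y = madd h (\<lambda>i j. - h i j + y i j)"
      by (intro ext) (simp add: madd_def add.assoc[symmetric])
    ultimately show "y \<in> madd h ` supported S" by blast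
  qed
qed

lemma ut_w_eq_supported:
  "ut_w n w = supported {(i, j) \<in> positions n. j - i \<le> iota n w i}"
  by (auto simp: ut_w_def ut_def supported_def positions_def)

lemma chibar_madd_ut_w:
  assumes "h \<in> ut_w n w"
  shows "chibar n w (madd g h) = chibar n w (g :: 'a::{finite,field} mat)"
proof -
  have "madd (madd g h) ` C = madd g ` C"
    if coset: "C \<in> {madd x ` ut_w n w | x. x \<in> ut n}" for C :: "'a mat set"
  proof -
    obtain x where C: "C = madd x ` ut_w n w" using coset by blast
    have "madd h ` C = madd x ` madd h ` ut_w n w"
      by (simp add: C image_image madd_left_commute[of h x])
    also have "\<dots> = C"
      using madd_image_supported[OF assms[unfolded ut_w_eq_supported]]
      by (simp add: C ut_w_eq_supported)
    finally have "madd h ` C = C" .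
    then show ?thesis
      by (metis (no_types, lifting) image_cong image_image madd_assoc)
  qed
  then show ?thesis
    unfolding chibar_def by (metis (no_types, lifting))
qed

lemma supported_outside_eq_0: "x \<in> supported S \<Longrightarrow> (i, j) \<notin> S \<Longrightarrow> x i j = 0"
  by (auto simp: supported_def)

lemma bij_betw_madd_mat_single:
  assumes "(a, b) \<in> S"
  shows "bij_betw (\<lambda>(r0, c). madd r0 (mat_single (a, b) c))
           (supported (S - {(a, b)}) \<times> UNIV) (supported S :: 'a::monoid_add mat set)"
  by (rule bij_betw_byWitness[where f' = "\<lambda>r. (\<lambda>i j. if (i, j) = (a, b) then 0 else r i j, r a b)"])
     (use assms in \<open>auto simp: madd_def mat_single_def fun_eq_iff supported_outside_eq_0\<close>,
      auto simp: supported_def)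

lemma nonzero_entries_madd_mat_single:
  assumes "r0 \<in> supported (S - {(a, b)})"
  shows "{(i, j). madd r0 (mat_single (a, b) c) i j \<noteq> 0}
       = (if c = 0 then {(i, j). r0 i j \<noteq> (0::'a::monoid_add)}
          else insert (a, b) {(i, j). r0 i j \<noteq> 0})"
proof -
  have "r0 a b = 0" using assms by (simp add: supported_outside_eq_0)
  then show ?thesis by (auto simp: madd_def mat_single_def)
qed

lemma sum_field_weights:
  "(\<Sum>c::'a::{finite,field}\<in>UNIV. if c = 0 then 1 else - 1 / (of_nat (card (UNIV :: 'a set)) - 1))
   = (0::complex)"
proof -
  let ?q = "of_nat (card (UNIV :: 'a set)) :: complex"
  have "card (UNIV :: 'a set) \<ge> 2"
    using card_mono[of UNIV "{0::'a, 1}"] by simp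
  then have q: "of_nat (card (UNIV :: 'a set) - 1) = ?q - 1" "?q - 1 \<noteq> 0"
    by simp_all
  have "(\<Sum>c::'a\<in>UNIV. if c = 0 then 1 else - 1 / (?q - 1))
      = 1 + (\<Sum>c\<in>UNIV - {0::'a}. - 1 / (?q - 1))"
    by (simp add: sum.remove[of UNIV 0])
  also have "\<dots> = 1 + of_nat (card (UNIV - {0::'a})) * (- 1 / (?q - 1))"
    by (simp only: sum_constant)
  also have "\<dots> = 1 + (?q - 1) * (- 1 / (?q - 1))"
    by (simp only: card_Diff_singleton[OF UNIV_I] q(1))
  also have "\<dots> = 0"
    using q(2) by simp
  finally show ?thesis .
qed

lemma sum_supported_weighted_eq_0:
  fixes f :: "'a::{finite,field} mat \<Rightarrow> complex"
  assumes "finite S" "(a, b) \<in> S"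
    and invariant: "\<And>x c. f (madd x (mat_single (a, b) c)) = f x"
  shows "(\<Sum>r\<in>supported S.
            (- 1 / (of_nat (card (UNIV :: 'a set)) - 1)) ^ card {(i, j). r i j \<noteq> 0} * f r) = 0"
proof -
  let ?\<omega> = "- 1 / (of_nat (card (UNIV :: 'a set)) - 1) :: complex"
  let ?N = "\<lambda>r::'a mat. card {(i, j). r i j \<noteq> 0}"
  have summand: "?\<omega> ^ ?N (madd r0 (mat_single (a, b) c)) * f (madd r0 (mat_single (a, b) c))
      = (if c = 0 then 1 else ?\<omega>) * (?\<omega> ^ ?N r0 * f r0)"
    if r0: "r0 \<in> supported (S - {(a, b)})" for r0 c
  proof -
    have "finite {(i, j). r0 i j \<noteq> 0}" "(a, b) \<notin> {(i, j). r0 i j \<noteq> 0}"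
      using r0 \<open>finite S\<close> by (auto simp: supported_def intro: finite_subset)
    then show ?thesis
      by (simp add: nonzero_entries_madd_mat_single[OF r0] invariant)
  qed
  have "(\<Sum>r\<in>supported S. ?\<omega> ^ ?N r * f r)
      = (\<Sum>r0\<in>supported (S - {(a, b)}). \<Sum>c\<in>UNIV.
           ?\<omega> ^ ?N (madd r0 (mat_single (a, b) c)) * f (madd r0 (mat_single (a, b) c)))"
    by (simp add: sum.reindex_bij_betw[OF bij_betw_madd_mat_single[OF \<open>(a, b) \<in> S\<close>], symmetric]
                  sum.cartesian_product case_prod_beta)
  also have "\<dots> = (\<Sum>r0\<in>supported (S - {(a, b)}).
                     \<Sum>c::'a\<in>UNIV. (if c = 0 then 1 else ?\<omega>) * (?\<omega> ^ ?N r0 * f r0))"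
    by (intro sum.cong refl) (erule summand)
  also have "\<dots> = 0"
    by (simp only: sum_distrib_right[symmetric] sum_field_weights mult_zero_left sum.neutral_const)
  finally show ?thesis .
qed

lemma finite_positions: "finite (positions n)"
  by (rule finite_subset[of _ "{1..n} \<times> {1..n}"]) (auto simp: positions_def)

lemma Dela_eq_0_if_invariant:
  fixes \<gamma> :: "'a::{finite,field} mat \<Rightarrow> complex"
  assumes "(a, b) \<in> RA n A"
    and invariant: "\<And>g c. \<gamma> (madd g (mat_single (a, b) c)) = \<gamma> g"
  shows "Dela n A \<gamma> u' u = 0"
proof -
  have "finite (RA n A)"
    by (rule finite_subset[OF _ finite_positions]) (auto simp: RA_def)
  then have "(\<Sum>r\<in>supported (RA n A).
      (- 1 / (of_nat (card (UNIV :: 'a set)) - 1)) ^ card {(i, j). r i j \<noteq> 0} * \<gamma> (madd g r)) = 0"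
    for g
    using assms(1) by (rule sum_supported_weighted_eq_0) (simp add: madd_assoc[symmetric] invariant)
  then show ?thesis
    unfolding Dela_def by simp
qed

lemma iota_le:
  assumes "w permutes {1..n}"
  shows "iota n w j \<le> n - j"
proof -
  let ?I = "{i \<in> {1..n}. w i \<in> {j<..n}}"
  have "{i \<in> {1..n}. i < inv w j \<and> w i > j} \<subseteq> ?I"
    using permutes_in_image[OF assms] by fastforce
  then have "iota n w j \<le> card ?I"
    unfolding iota_def by (intro card_mono) auto
  also have "card ?I \<le> card {j<..n}"
    using permutes_inj[OF assms] by (intro card_inj_on_le) (auto intro: inj_on_subset)
  finally show ?thesis by simp
qed

theorem lemma5p4:
  fixes n :: nat and A :: "nat set" and w :: "nat \<Rightarrow> nat"
  assumes "A \<subseteq> {1..n}"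
    and "w permutes {1..n}"
    and "\<exists>u' \<in> supported (UAv n A). \<exists>u \<in> supported (UA n A).
           Dela n A (chibar n w :: 'a::{finite,field} mat \<Rightarrow> complex) u' u \<noteq> 0"
  shows "{(j, j + iota n w j) | j. j \<in> {1..n} \<and> j \<notin> A \<and> iota n w j \<noteq> 0} \<subseteq> UAv n A"
proof (rule ccontr)
  assume "\<not> ?thesis"
  then obtain j where j: "j \<in> {1..n}" "j \<notin> A" "iota n w j \<noteq> 0"
    and outside: "(j, j + iota n w j) \<notin> UAv n A"
    by blast
  have pos: "(j, j + iota n w j) \<in> positions n"
    using j iota_le[OF assms(2), of j] by (auto simp: positions_def)
  then have "(j, j + iota n w j) \<in> RA n A"
    using j(2) outside by (auto simp: UAv_def RA_def)
  moreover have "mat_single (j, j + iota n w j) c \<in> ut_w n w" for c :: 'a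
    using pos by (auto simp: ut_w_eq_supported supported_def mat_single_def)
  ultimately have "Dela n A (chibar n w :: 'a mat \<Rightarrow> complex) u' u = 0" for u' u
    by (intro Dela_eq_0_if_invariant chibar_madd_ut_w)
  with assms(3) show False
    by blast
qed

end
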